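(* Let $L$ be an $\omega$-regular language over $\Sigma$, let $M=(\Sigma,Q,q_0,\delta)$ be a complete DFA, and let $u\in\Sigma^*$. Define the relation $\approx^u_{S'}$ on $\Sigma^*$ by $x\approx^u_{S'}y$ iff $M(ux)=M(uy)$ and for every $v\in\Sigma^*$, if $M(uxv)=M(u)$ then $\big(u(xv)^\omega\in L\Leftrightarrow u(yv)^\omega\in L\big)$. Then the index of $\approx^u_{S'}$ is bounded by $|Q|\cdot|\approx^u_P|$, where $|\approx^u_P|$ is the index of $\approx^u_P$.
   Context: For a complete DFA $M$ and finite word $w$, $M(w)$ is the state reached from the initial state on $w$. The relation $\approx^u_P$ on $\Sigma^*$ is defined by $x\approx^u_P y$ iff for all $v\in\Sigma^*$, $u(xv)^\omega\in L\Leftrightarrow u(yv)^\omega\in L$. The index of an equivalence relation is its number of equivalence classes. *)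

theory Defs
  imports Main "HOL-Library.Omega_Words_Fun" "HOL-Library.Extended_Nat"
begin

(* omega-regular languages: accepted by a nondeterministic Buechi automaton
   with finitely many states (states encoded as natural numbers) *)
definition omega_regular :: "'a word set \<Rightarrow> bool" where
  "omega_regular L \<longleftrightarrow>
     (\<exists>(Qb::nat set) (I::nat set) (Delta::(nat \<times> 'a \<times> nat) set) (F::nat set).
        finite Qb \<and> I \<subseteq> Qb \<and> F \<subseteq> Qb \<and> Delta \<subseteq> Qb \<times> UNIV \<times> Qb \<and>
        L = {w. \<exists>r. r 0 \<in> I \<and> (\<forall>i. (r i, w i, r (Suc i)) \<in> Delta) \<and>
                       (\<exists>\<^sub>\<infinity>i. r i \<in> F)})"

(* complete DFA with state type 'q, initial state q0, transition function delta;
   M(w) = dfa_run q0 delta w *)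
definition dfa_run :: "'q \<Rightarrow> ('q \<Rightarrow> 'a \<Rightarrow> 'q) \<Rightarrow> 'a list \<Rightarrow> 'q" where
  "dfa_run q0 delta w = foldl delta q0 w"

definition periodic_rel :: "'a word set \<Rightarrow> 'a list \<Rightarrow> 'a list \<Rightarrow> 'a list \<Rightarrow> bool" where
  "periodic_rel L u x y \<longleftrightarrow> (\<forall>v. (u \<frown> (x @ v)\<^sup>\<omega> \<in> L) \<longleftrightarrow> (u \<frown> (y @ v)\<^sup>\<omega> \<in> L))"

definition syntactic'_rel :: "'a word set \<Rightarrow> 'q \<Rightarrow> ('q \<Rightarrow> 'a \<Rightarrow> 'q) \<Rightarrow> 'a list \<Rightarrow> 'a list \<Rightarrow> 'a list \<Rightarrow> bool" where
  "syntactic'_rel L q0 delta u x y \<longleftrightarrow>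
     dfa_run q0 delta (u @ x) = dfa_run q0 delta (u @ y) \<and>
     (\<forall>v. dfa_run q0 delta (u @ x @ v) = dfa_run q0 delta u \<longrightarrow>
          ((u \<frown> (x @ v)\<^sup>\<omega> \<in> L) \<longleftrightarrow> (u \<frown> (y @ v)\<^sup>\<omega> \<in> L)))"

definition rel_index :: "('a list \<Rightarrow> 'a list \<Rightarrow> bool) \<Rightarrow> enat" where
  "rel_index R = (if finite (UNIV // {(x, y). R x y}) then enat (card (UNIV // {(x, y). R x y})) else \<infinity>)"

end

theory Submission
  imports Defs
begin

text \<open>A class of \<open>\<approx>\<^sup>u\<^sub>S\<^sub>'\<close> is determined by the DFA state \<open>M(ux)\<close> together with the
  \<open>\<approx>\<^sup>u\<^sub>P\<close>-class of \<open>x\<close>: equal states make the extra condition of \<open>\<approx>\<^sup>u\<^sub>S\<^sub>'\<close> follow from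
  \<open>\<approx>\<^sup>u\<^sub>P\<close>. Hence \<open>x \<mapsto> (M(ux), [x]\<^sub>P)\<close> maps onto at most \<open>|Q| \<cdot> |\<approx>\<^sup>u\<^sub>P|\<close> values and
  every \<open>\<approx>\<^sup>u\<^sub>S\<^sub>'\<close>-class is a union of its fibres.\<close>

lemma card_quotient_le_card_image:
  assumes equiv: "equiv A R"
    and fibres: "\<And>x y. x \<in> A \<Longrightarrow> y \<in> A \<Longrightarrow> f x = f y \<Longrightarrow> (x, y) \<in> R"
    and fin: "finite (f ` A)"
  shows "finite (A // R)" and "card (A // R) \<le> card (f ` A)"
proof -
  define h where "h z = R `` {SOME x. x \<in> A \<and> f x = z}" for z
  have "h (f x) = R `` {x}" if "x \<in> A" for x
  proof -
    define x' where "x' = (SOME x'. x' \<in> A \<and> f x' = f x)"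
    have "x' \<in> A \<and> f x' = f x"
      unfolding x'_def using that by (metis (mono_tags) someI)
    then have "(x', x) \<in> R" using fibres that by blast
    then show ?thesis unfolding h_def x'_def[symmetric] by (rule equiv_class_eq[OF equiv])
  qed
  then have "A // R = h ` f ` A" by (auto simp: quotient_def image_image)
  then show "finite (A // R)" and "card (A // R) \<le> card (f ` A)"
    using fin by (simp_all add: card_image_le)
qed

lemma equiv_periodic_rel: "equiv UNIV {(x, y). periodic_rel L u x y}"
  by (auto simp: equiv_def refl_on_def sym_def trans_def periodic_rel_def)

lemma equiv_syntactic'_rel: "equiv UNIV {(x, y). syntactic'_rel L q0 delta u x y}"
  unfolding equiv_def refl_on_def sym_def trans_def syntactic'_rel_def
  by (simp add: dfa_run_def)

lemma syntactic'_rel_if_periodic_rel: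
  assumes "dfa_run q0 delta (u @ x) = dfa_run q0 delta (u @ y)" and "periodic_rel L u x y"
  shows "syntactic'_rel L q0 delta u x y"
  using assms by (simp add: syntactic'_rel_def periodic_rel_def)

theorem lemma11:
  fixes L :: "('a::finite) word set"
    and q0 :: "'q::finite"
    and delta :: "'q \<Rightarrow> 'a \<Rightarrow> 'q"
    and u :: "'a list"
  assumes "omega_regular L"
  shows "rel_index (syntactic'_rel L q0 delta u) \<le> enat (card (UNIV :: 'q set)) * rel_index (periodic_rel L u)"
proof (cases "finite (UNIV // {(x, y). periodic_rel L u x y})")
  case False
  then show ?thesis by (simp add: rel_index_def finite_UNIV_card_ge_0)
next
  case finP: True
  define P where "P = {(x, y). periodic_rel L u x y}"
  define f where "f x = (dfa_run q0 delta (u @ x), P `` {x})" for x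
  have fibres: "(x, y) \<in> {(x, y). syntactic'_rel L q0 delta u x y}" if "f x = f y" for x y
  proof -
    from that have "P `` {x} = P `` {y}" and "dfa_run q0 delta (u @ x) = dfa_run q0 delta (u @ y)"
      by (simp_all add: f_def)
    moreover have "periodic_rel L u x y" using \<open>P `` {x} = P `` {y}\<close>
      unfolding P_def eq_equiv_class_iff[OF equiv_periodic_rel UNIV_I UNIV_I] by simp
    ultimately show ?thesis by (simp add: syntactic'_rel_if_periodic_rel)
  qed
  have range_f: "range f \<subseteq> (UNIV :: 'q set) \<times> (UNIV // P)"
    by (auto simp: f_def quotient_def)
  have fin: "finite ((UNIV :: 'q set) \<times> (UNIV // P))"
    using finP by (simp add: P_def finite_cartesian_product)
  note bound = card_quotient_le_card_image[OF equiv_syntactic'_rel fibres finite_subset[OF range_f fin]]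
  have "card (range f) \<le> card (UNIV :: 'q set) * card (UNIV // P)"
    using card_mono[OF fin range_f] by (simp add: card_cartesian_product)
  then show ?thesis using bound finP by (simp add: rel_index_def P_def)
qed

end
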